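(* Let $n>f\ge0$, $b=\frac{f}{n-f}$, let $F_2$ be a $(b,\rho)$-robust summation and $F_1$ an $(f,\nu)$-robust aggregation rule. For inputs $x_1,\dots,x_n\in\mathbb{R}^d$ define, for each $i\in[n]$, $$y_i=x_i-F_2\Big(\big(\tfrac{1}{n-f},\,x_i-x_j\big)_{j\in[n]}\Big),$$ and define the aggregation rule $\tilde F(x_1,\dots,x_n):=F_1(y_1,\dots,y_n)$. Then $\tilde F$ is an $(f,\tilde\nu)$-robust aggregation rule with $$\tilde\nu=\delta(1+\nu),\qquad \delta:=\frac{2\rho f}{n-f}.$$
   Context: $(f,\nu)$-robust aggregation rule: a map $F:\mathbb{R}^{d\times n}\to\mathbb{R}^d$ such that for all $x_1,\dots,x_n\in\mathbb{R}^d$ and every $S\subset[n]$ with $|S|=n-f$, $\|F(x_1,\dots,x_n)-\bar x_S\|^2\le \nu\frac{1}{|S|}\sum_{i\in S}\|x_i-\bar x_S\|^2$, where $\bar x_S=\frac{1}{|S|}\sum_{i\in S}x_i$. $(b,\rho)$-robust summation: a map $F:(\mathbb{R}_+\times\mathbb{R}^d)^n\to\mathbb{R}^d$ such that for all vectors $z_1,\dots,z_n\in\mathbb{R}^d$, all weights $\omega_1,\dots,\omega_n\ge0$ and every $S\subset[n]$ with $\sum_{i\in[n]\setminus S}\omega_i\le b$, one has $\big\|F((\omega_i,z_i)_{i\in[n]})-\sum_{i\in S}\omega_iz_i\big\|^2\le\rho b\sum_{i\in S}\omega_i\|z_i\|^2$. *)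

theory Defs
  imports "HOL-Analysis.Analysis"
begin

text \<open>Inputs x_1..x_n are represented as functions nat => 'a, indices 0..n-1 (i.e. [n] = {..<n}).
  Only the values at indices below n are meaningful.\<close>

definition avg_on :: "nat set \<Rightarrow> (nat \<Rightarrow> 'a::real_vector) \<Rightarrow> 'a" where
  "avg_on S x = (1 / real (card S)) *\<^sub>R (\<Sum>i\<in>S. x i)"

definition robust_aggregation ::
  "nat \<Rightarrow> nat \<Rightarrow> real \<Rightarrow> ((nat \<Rightarrow> 'a::real_inner) \<Rightarrow> 'a) \<Rightarrow> bool" where
  "robust_aggregation n f \<nu> F \<longleftrightarrow>
     (\<forall>x S. S \<subseteq> {..<n} \<and> card S = n - f \<longrightarrow>
        (norm (F x - avg_on S x))\<^sup>2
          \<le> \<nu> * ((1 / real (card S)) * (\<Sum>i\<in>S. (norm (x i - avg_on S x))\<^sup>2)))"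

definition robust_summation ::
  "nat \<Rightarrow> real \<Rightarrow> real \<Rightarrow> ((nat \<Rightarrow> real \<times> 'a::real_inner) \<Rightarrow> 'a) \<Rightarrow> bool" where
  "robust_summation n b \<rho> F \<longleftrightarrow>
     (\<forall>\<omega> z S. (\<forall>i<n. \<omega> i \<ge> 0) \<and> S \<subseteq> {..<n} \<and> (\<Sum>i\<in>{..<n} - S. \<omega> i) \<le> b \<longrightarrow>
        (norm (F (\<lambda>i. (\<omega> i, z i)) - (\<Sum>i\<in>S. \<omega> i *\<^sub>R z i)))\<^sup>2
          \<le> \<rho> * b * (\<Sum>i\<in>S. \<omega> i * (norm (z i))\<^sup>2))"

end

theory Submission
  imports Defs
begin

text \<open>Fix a good set S of size m = n - f, with mean x_S and variance s. The weights 1/m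
  put total mass f/m = b outside S, so for i in S robust summation estimates
  x_i - x_S = (1/m) \<Sum>j\<in>S. (x_i - x_j) up to an error e_i with
  |e_i|^2 \<le> \<rho> b (|x_i - x_S|^2 + s); averaging over S, the mean of |e_i|^2 is at most
  2 \<rho> b s. The filtered inputs are y_i = x_S - e_i, so F1 y - x_S = a - e_S, where e_S is the mean
  of the errors and a = F1 y - y_S satisfies |a|^2 \<le> \<nu> Var(e) by robustness of F1. Young's
  inequality gives |a - e_S|^2 \<le> (1 + \<nu>) (Var(e) + |e_S|^2), and the right-hand side is
  (1 + \<nu>) times the mean of |e_i|^2.\<close>

definition var_on :: "nat set \<Rightarrow> (nat \<Rightarrow> 'a::real_inner) \<Rightarrow> real" where
  "var_on S x = (1 / real (card S)) * (\<Sum>i\<in>S. (norm (x i - avg_on S x))\<^sup>2)"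

lemma robust_aggregation_iff_var_on:
  "robust_aggregation n f \<nu> F \<longleftrightarrow>
     (\<forall>x S. S \<subseteq> {..<n} \<and> card S = n - f \<longrightarrow> (norm (F x - avg_on S x))\<^sup>2 \<le> \<nu> * var_on S x)"
  unfolding robust_aggregation_def var_on_def ..

lemma var_on_nonneg: "0 \<le> var_on S x"
  unfolding var_on_def by (simp add: sum_nonneg)

lemma avg_on_const_minus:
  assumes "card S > 0"
  shows "avg_on S (\<lambda>i. c - u i) = c - avg_on S u"
proof -
  have "finite S" "S \<noteq> {}" using assms card_gt_0_iff by blast+
  then show ?thesis
    by (simp add: avg_on_def sum_subtractf scaleR_diff_right sum_constant_scaleR)
qed

lemma var_on_const_minus: "var_on S (\<lambda>i. c - u i) = var_on S u"
proof (cases "card S > 0")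
  case True
  have "norm (c - u i - avg_on S (\<lambda>i. c - u i)) = norm (u i - avg_on S u)" for i
    using True by (simp add: avg_on_const_minus norm_minus_commute)
  then show ?thesis by (simp add: var_on_def)
qed (simp add: var_on_def)

lemma mean_sq_norm_eq_var_on_add:
  fixes u :: "nat \<Rightarrow> 'a::real_inner"
  assumes "card S > 0"
  shows "(1 / real (card S)) * (\<Sum>i\<in>S. (norm (u i))\<^sup>2) = var_on S u + (norm (avg_on S u))\<^sup>2"
proof -
  define c where "c = avg_on S u"
  define k where "k = real (card S)"
  have k: "k > 0" using assms by (simp add: k_def)
  have sum_u: "(\<Sum>i\<in>S. u i) = k *\<^sub>R c"
    using k by (simp add: c_def avg_on_def k_def)
  have "(\<Sum>i\<in>S. (norm (u i - c))\<^sup>2)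
      = (\<Sum>i\<in>S. (norm (u i))\<^sup>2 - 2 * (u i \<bullet> c) + (norm c)\<^sup>2)"
    by (rule sum.cong) (auto simp: power2_norm_eq_inner inner_diff inner_commute)
  also have "\<dots> = (\<Sum>i\<in>S. (norm (u i))\<^sup>2) - 2 * ((\<Sum>i\<in>S. u i) \<bullet> c) + k * (norm c)\<^sup>2"
    by (simp add: sum.distrib sum_subtractf sum_distrib_left inner_sum_left k_def)
  also have "\<dots> = (\<Sum>i\<in>S. (norm (u i))\<^sup>2) - k * (norm c)\<^sup>2"
    by (simp add: sum_u power2_norm_eq_inner)
  finally show ?thesis
    using k by (simp add: var_on_def c_def[symmetric] k_def[symmetric] field_simps)
qed

lemma sq_norm_diff_le_Young:
  fixes a e :: "'a::real_inner"
  assumes "0 \<le> \<nu>" "(norm a)\<^sup>2 \<le> \<nu> * V" "0 \<le> V"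
  shows "(norm (a - e))\<^sup>2 \<le> (1 + \<nu>) * (V + (norm e)\<^sup>2)"
proof (cases "\<nu> = 0")
  case True
  then have "a = 0" using assms(2) by simp
  then show ?thesis using True assms(3) by (simp add: norm_minus_commute)
next
  case False
  then have \<nu>: "\<nu> > 0" using assms(1) by simp
  have "(1 + \<nu>) * (norm a)\<^sup>2 + \<nu> * (1 + \<nu>) * (norm e)\<^sup>2 - \<nu> * (norm (a - e))\<^sup>2
      = (norm (a + \<nu> *\<^sub>R e))\<^sup>2"
    by (simp add: power2_norm_eq_inner inner_add inner_diff inner_commute algebra_simps)
  then have "\<nu> * (norm (a - e))\<^sup>2 \<le> (1 + \<nu>) * (norm a)\<^sup>2 + \<nu> * (1 + \<nu>) * (norm e)\<^sup>2"
    by (metis diff_ge_0_iff_ge zero_le_power2)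
  also have "\<dots> \<le> (1 + \<nu>) * (\<nu> * V) + \<nu> * (1 + \<nu>) * (norm e)\<^sup>2"
    using assms(1,2) by (intro add_right_mono mult_left_mono) auto
  also have "\<dots> = \<nu> * ((1 + \<nu>) * (V + (norm e)\<^sup>2))"
    by (simp add: algebra_simps)
  finally show ?thesis using \<nu> by simp
qed

lemma robust_summation_centered_differences:
  fixes x :: "nat \<Rightarrow> 'a::real_inner"
  assumes F2: "robust_summation n (real f / real (n - f)) \<rho> F2"
    and S: "S \<subseteq> {..<n}" "card S = n - f" and "f < n" and "i \<in> S"
  shows "(norm (F2 (\<lambda>j. (1 / real (n - f), x i - x j)) - (x i - avg_on S x)))\<^sup>2
           \<le> \<rho> * (real f / real (n - f)) * ((norm (x i - avg_on S x))\<^sup>2 + var_on S x)"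
proof -
  define m where "m = real (n - f)"
  have card_S: "card S > 0" "real (card S) = m" using S \<open>f < n\<close> by (simp_all add: m_def)
  have "finite S" using S finite_subset by blast
  then have "card ({..<n} - S) = f"
    using S \<open>f < n\<close> by (simp add: card_Diff_subset)
  then have outside: "(\<Sum>j\<in>{..<n} - S. 1 / m) \<le> real f / m" by simp
  have "(\<Sum>j\<in>S. (1 / m) *\<^sub>R (x i - x j)) = avg_on S (\<lambda>j. x i - x j)"
    by (simp add: avg_on_def card_S scaleR_sum_right)
  also have "\<dots> = x i - avg_on S x" using card_S(1) by (rule avg_on_const_minus)
  finally have sum_eq: "(\<Sum>j\<in>S. (1 / m) *\<^sub>R (x i - x j)) = x i - avg_on S x" .
  have "(\<Sum>j\<in>S. 1 / m * (norm (x i - x j))\<^sup>2) = var_on S (\<lambda>j. x i - x j) + (norm (x i - avg_on S x))\<^sup>2"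
    using mean_sq_norm_eq_var_on_add[OF card_S(1), of "\<lambda>j. x i - x j"]
    by (simp add: card_S avg_on_const_minus sum_distrib_left)
  then have sq_eq: "(\<Sum>j\<in>S. 1 / m * (norm (x i - x j))\<^sup>2) = (norm (x i - avg_on S x))\<^sup>2 + var_on S x"
    by (simp add: var_on_const_minus)
  have "(norm (F2 (\<lambda>j. (1 / m, x i - x j)) - (\<Sum>j\<in>S. (1 / m) *\<^sub>R (x i - x j))))\<^sup>2
      \<le> \<rho> * (real f / m) * (\<Sum>j\<in>S. 1 / m * (norm (x i - x j))\<^sup>2)"
    by (rule F2[unfolded robust_summation_def m_def [symmetric], rule_format])
      (use outside S(1) \<open>f < n\<close> in \<open>simp add: m_def\<close>)
  then show ?thesis unfolding sum_eq sq_eq by (simp add: m_def)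
qed

lemma mean_sq_error_robust_summation_centered:
  fixes x :: "nat \<Rightarrow> 'a::real_inner"
  assumes F2: "robust_summation n (real f / real (n - f)) \<rho> F2"
    and S: "S \<subseteq> {..<n}" "card S = n - f" and "f < n"
  shows "(1 / real (card S)) *
           (\<Sum>i\<in>S. (norm (F2 (\<lambda>j. (1 / real (n - f), x i - x j)) - (x i - avg_on S x)))\<^sup>2)
         \<le> 2 * \<rho> * (real f / real (n - f)) * var_on S x"
proof -
  define b where "b = real f / real (n - f)"
  define k where "k = real (card S)"
  have k: "k > 0" using S \<open>f < n\<close> by (simp add: k_def)
  have "(\<Sum>i\<in>S. (norm (F2 (\<lambda>j. (1 / real (n - f), x i - x j)) - (x i - avg_on S x)))\<^sup>2)
      \<le> (\<Sum>i\<in>S. \<rho> * b * ((norm (x i - avg_on S x))\<^sup>2 + var_on S x))"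
    using robust_summation_centered_differences[OF F2 S \<open>f < n\<close>]
    by (intro sum_mono) (simp add: b_def)
  also have "\<dots> = \<rho> * b * ((\<Sum>i\<in>S. (norm (x i - avg_on S x))\<^sup>2) + k * var_on S x)"
    by (simp add: sum_distrib_left[symmetric] sum.distrib k_def)
  also have "\<dots> = \<rho> * b * (2 * k * var_on S x)"
    using k by (simp add: var_on_def k_def)
  finally show ?thesis
    using k by (simp add: b_def k_def [symmetric] field_simps)
qed

lemma robust_aggregation_centered_filter_nonneg:
  fixes F1 :: "(nat \<Rightarrow> 'a::real_inner) \<Rightarrow> 'a" and F2 :: "(nat \<Rightarrow> real \<times> 'a) \<Rightarrow> 'a"
  assumes "f < n" "0 \<le> \<nu>"
    and F2: "robust_summation n (real f / real (n - f)) \<rho> F2"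
    and F1: "robust_aggregation n f \<nu> F1"
  shows "robust_aggregation n f ((2 * \<rho> * real f / real (n - f)) * (1 + \<nu>))
           (\<lambda>x. F1 (\<lambda>i. x i - F2 (\<lambda>j. (1 / real (n - f), x i - x j))))"
  unfolding robust_aggregation_iff_var_on
proof (intro allI impI)
  fix x :: "nat \<Rightarrow> 'a" and S
  assume S: "S \<subseteq> {..<n} \<and> card S = n - f"
  then have card_S: "card S > 0" using \<open>f < n\<close> by simp
  define xS where "xS = avg_on S x"
  define e where "e i = F2 (\<lambda>j. (1 / real (n - f), x i - x j)) - (x i - xS)" for i
  define y where "y = (\<lambda>i. xS - e i)"
  have filtered: "(\<lambda>i. x i - F2 (\<lambda>j. (1 / real (n - f), x i - x j))) = y"
    by (simp add: fun_eq_iff y_def e_def)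
  have avg_y: "avg_on S y = xS - avg_on S e"
    using card_S by (simp add: y_def avg_on_const_minus)
  have var_y: "var_on S y = var_on S e"
    by (simp add: y_def var_on_const_minus)
  have "(norm (F1 y - avg_on S y))\<^sup>2 \<le> \<nu> * var_on S e"
    using F1 S unfolding robust_aggregation_iff_var_on var_y [symmetric] by blast
  then have "(norm ((F1 y - avg_on S y) - avg_on S e))\<^sup>2
      \<le> (1 + \<nu>) * (var_on S e + (norm (avg_on S e))\<^sup>2)"
    by (rule sq_norm_diff_le_Young[OF \<open>0 \<le> \<nu>\<close> _ var_on_nonneg])
  also have "\<dots> = (1 + \<nu>) * ((1 / real (card S)) * (\<Sum>i\<in>S. (norm (e i))\<^sup>2))"
    by (simp only: mean_sq_norm_eq_var_on_add[OF card_S])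
  also have "\<dots> \<le> (1 + \<nu>) * (2 * \<rho> * (real f / real (n - f)) * var_on S x)"
    using mean_sq_error_robust_summation_centered[OF F2 _ _ \<open>f < n\<close>, of S x] S \<open>0 \<le> \<nu>\<close>
    by (intro mult_left_mono) (simp_all add: e_def xS_def)
  finally show "(norm (F1 (\<lambda>i. x i - F2 (\<lambda>j. (1 / real (n - f), x i - x j))) - avg_on S x))\<^sup>2
      \<le> (2 * \<rho> * real f / real (n - f)) * (1 + \<nu>) * var_on S x"
    by (simp add: filtered avg_y xS_def [symmetric] algebra_simps)
qed

lemma robust_aggregation_neg_var_on_eq_0:
  fixes F :: "(nat \<Rightarrow> 'a::real_inner) \<Rightarrow> 'a" and x :: "nat \<Rightarrow> 'a"
  assumes "robust_aggregation n f \<nu> F" "\<nu> < 0" "S \<subseteq> {..<n}" "card S = n - f"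
  shows "var_on S x = 0"
proof -
  have "(norm (F x - avg_on S x))\<^sup>2 \<le> \<nu> * var_on S x"
    using assms(1,3,4) unfolding robust_aggregation_iff_var_on by blast
  then have "0 \<le> \<nu> * var_on S x"
    by (rule order_trans [OF zero_le_power2])
  then show ?thesis
    using \<open>\<nu> < 0\<close> var_on_nonneg[of S x] by (simp add: zero_le_mult_iff)
qed

lemma robust_aggregation_degenerate:
  fixes G :: "(nat \<Rightarrow> 'a::real_inner) \<Rightarrow> 'a"
  assumes "\<And>x :: nat \<Rightarrow> 'a. \<And>S. S \<subseteq> {..<n} \<Longrightarrow> card S = n - f \<Longrightarrow> var_on S x = 0"
    and "robust_aggregation n f \<nu> G"
  shows "robust_aggregation n f \<nu>' G"
  using assms unfolding robust_aggregation_iff_var_on by simp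

theorem mainTheorem4:
  fixes n f :: nat and \<rho> \<nu> :: real
    and F1 :: "(nat \<Rightarrow> 'a::euclidean_space) \<Rightarrow> 'a"
    and F2 :: "(nat \<Rightarrow> real \<times> 'a) \<Rightarrow> 'a"
  assumes "f < n"
    and "robust_summation n (real f / real (n - f)) \<rho> F2"
    and "robust_aggregation n f \<nu> F1"
  shows "robust_aggregation n f ((2 * \<rho> * real f / real (n - f)) * (1 + \<nu>))
           (\<lambda>x. F1 (\<lambda>i. x i - F2 (\<lambda>j. (1 / real (n - f), x i - x j))))"
proof (cases "0 \<le> \<nu>")
  case True
  then show ?thesis using robust_aggregation_centered_filter_nonneg assms by blast
next
  case False
  have var_0: "var_on S x = 0" if "S \<subseteq> {..<n}" "card S = n - f" for S and x :: "nat \<Rightarrow> 'a"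
    using robust_aggregation_neg_var_on_eq_0[OF assms(3)] False that by simp
  have "robust_aggregation n f 0 F1"
    using var_0 assms(3) by (rule robust_aggregation_degenerate)
  then have "robust_aggregation n f ((2 * \<rho> * real f / real (n - f)) * (1 + 0))
      (\<lambda>x. F1 (\<lambda>i. x i - F2 (\<lambda>j. (1 / real (n - f), x i - x j))))"
    by (rule robust_aggregation_centered_filter_nonneg[OF \<open>f < n\<close> order_refl assms(2)])
  with var_0 show ?thesis by (rule robust_aggregation_degenerate)
qed

end
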